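(* Let $\theta:=\sqrt{5-\pi^2/3}$ and define, for $(Z_1,Z_2)\in\mathbb{R}^2$ and $\delta>0$, $$E(Z_1,Z_2):=Z_1^2+Z_2^2+2Z_1,$$ $$P_\delta(Z_1,Z_2):=(1+\delta)(Z_1^2+Z_2^2)+2Z_1Z_2^2+\frac23Z_1^3+6\delta\big(|Z_1|Z_2^2+|Z_1|^3\big)-2\Big(1-\delta-\Big(\frac23+\delta\Big)\frac{21}{20}\theta Z_2\Big)Z_2^2.$$ There exist $\delta_2,\delta_3>0$ such that for any $0<\delta<\delta_2$: if $(Z_1,Z_2)\in\mathbb{R}^2$ satisfies $|E(Z_1,Z_2)|\le\delta_3$, then $$P_\delta(Z_1,Z_2)-|E(Z_1,Z_2)|^2\le0.$$ *)

theory Defs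
  imports Complex_Main
begin

definition theta :: real where
  "theta = sqrt (5 - pi^2 / 3)"

definition Efun :: "real \<Rightarrow> real \<Rightarrow> real" where
  "Efun Z1 Z2 = Z1^2 + Z2^2 + 2 * Z1"

definition Pfun :: "real \<Rightarrow> real \<Rightarrow> real \<Rightarrow> real" where
  "Pfun \<delta> Z1 Z2 = (1 + \<delta>) * (Z1^2 + Z2^2) + 2 * Z1 * Z2^2 + (2/3) * Z1^3
     + 6 * \<delta> * (\<bar>Z1\<bar> * Z2^2 + \<bar>Z1\<bar>^3)
     - 2 * (1 - \<delta> - (2/3 + \<delta>) * (21/20) * theta * Z2) * Z2^2"

end

theory Submission
  imports Defs "HOL-Analysis.Complex_Transcendental"
begin

text \<open>
  Put \<open>t = -Z1\<close> and \<open>w = |Z2|\<close>, so that \<open>E = w^2 + t^2 - 2t\<close>: a small \<open>|E|\<close> keeps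
  the point near the circle of radius 1 around \<open>(-1, 0)\<close>. Since \<open>theta \<le> 55/42\<close> and all
  \<open>\<delta>\<close>-terms are at most \<open>27\<delta>(Z1^2 + Z2^2)\<close>, the quantity \<open>E^2 - P\<^sub>\<delta>\<close> is at least
  \<open>(1/20 - 27\<delta>)(Z1^2 + Z2^2) + Q E t w\<close> for an explicit polynomial \<open>Q\<close>. For \<open>w \<le> 1/2\<close>
  the nonnegativity of \<open>Q\<close> is elementary. For \<open>w \<ge> 1/2\<close> the circle forces
  \<open>1/8 \<le> t \<le> 15/8\<close>; bounding \<open>w^3\<close> by AM-GM and eliminating \<open>w^2 = E + 2t - t^2\<close> turns
  \<open>Q\<close> into \<open>t g(t) + O(E)\<close> with a cubic \<open>g \<ge> 1/8\<close> on \<open>[0, 2]\<close>.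
\<close>

lemma theta_bounds: "0 \<le> theta" "theta \<le> 55/42"
proof -
  have pi: "3.14 \<le> pi" "pi \<le> 3.2"
    using pi_approx by simp_all
  have "3.14^2 \<le> pi^2" "pi^2 \<le> 3.2^2"
    using pi by (intro power_mono; simp)+
  then have radicand: "0 \<le> 5 - pi^2/3" "5 - pi^2/3 \<le> (55/42)^2"
    by (simp_all add: power2_eq_square)
  show "0 \<le> theta"
    unfolding theta_def using radicand(1) by simp
  show "theta \<le> 55/42"
    unfolding theta_def using real_sqrt_le_mono[OF radicand(2)] by simp
qed

lemma Efun_le_one_bounds:
  assumes "\<bar>Efun Z1 Z2\<bar> \<le> 1"
  shows "\<bar>Z1\<bar> \<le> 3" "\<bar>Z2\<bar> \<le> 2"
proof -
  have circle: "(Z1 + 1)^2 + Z2^2 \<le> 2^2"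
    using assms unfolding Efun_def by (simp add: power2_eq_square algebra_simps)
  have "(Z1 + 1)^2 \<le> 2^2" "Z2^2 \<le> 2^2"
    using circle zero_le_power2[of Z2] zero_le_power2[of "Z1 + 1"] by linarith+
  then have "\<bar>Z1 + 1\<bar> \<le> 2" "\<bar>Z2\<bar> \<le> 2"
    using power2_le_iff_abs_le[of "2::real"] by simp_all
  then show "\<bar>Z1\<bar> \<le> 3" "\<bar>Z2\<bar> \<le> 2"
    by linarith+
qed

lemma Pfun_le:
  assumes "0 \<le> \<delta>" "\<bar>Z1\<bar> \<le> 3" "\<bar>Z2\<bar> \<le> 2"
  shows "Pfun \<delta> Z1 Z2 \<le> (1 + 27*\<delta>) * (Z1^2 + Z2^2)
           + 2*Z1*Z2^2 + (2/3)*Z1^3 - 2*Z2^2 + (11/6)*\<bar>Z2\<bar>^3"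
proof -
  define c where "c = (21/20) * theta"
  define s where "s = Z1^2 + Z2^2"
  define slope where "slope = s + 6*(\<bar>Z1\<bar>*Z2^2) + 6*\<bar>Z1\<bar>^3 + 2*Z2^2 + 2*(c*Z2^3)"
  have c: "0 \<le> c" "c \<le> 11/8"
    using theta_bounds by (simp_all add: c_def)
  have Pfun_split: "Pfun \<delta> Z1 Z2 = s + 2*Z1*Z2^2 + (2/3)*Z1^3 - 2*Z2^2 + (4/3)*(c*Z2^3) + \<delta> * slope"
    unfolding Pfun_def c_def s_def slope_def by (simp add: algebra_simps power2_eq_square power3_eq_cube)
  have c_Z2_cube: "c * Z2^3 \<le> c * \<bar>Z2\<bar>^3"
    using c(1) by (intro mult_left_mono) (simp_all add: power_abs[symmetric])
  have Z2_cube: "\<bar>Z2\<bar>^3 \<le> 2 * Z2^2"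
    using mult_right_mono[OF assms(3), of "Z2^2"] by (simp add: power3_eq_cube power2_eq_square)
  have "(4/3)*(c*Z2^3) \<le> (11/6)*\<bar>Z2\<bar>^3"
    using c_Z2_cube mult_right_mono[OF c(2), of "\<bar>Z2\<bar>^3"] by simp
  moreover have "slope \<le> 27 * s"
  proof -
    have "\<bar>Z1\<bar>*Z2^2 \<le> 3*Z2^2"
      using assms(2) by (simp add: mult_right_mono)
    moreover have "\<bar>Z1\<bar>^3 \<le> 3*Z1^2"
      using mult_right_mono[OF assms(2), of "Z1^2"] by (simp add: power3_eq_cube power2_eq_square)
    moreover have "c*\<bar>Z2\<bar>^3 \<le> (11/8)*(2*Z2^2)"
      using c Z2_cube by (intro mult_mono) simp_all
    ultimately show ?thesis
      using c_Z2_cube zero_le_power2[of Z1] zero_le_power2[of Z2] unfolding slope_def s_def by argo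
  qed
  then have "\<delta> * slope \<le> \<delta>*(27 * s)"
    using assms(1) by (rule mult_left_mono)
  ultimately show ?thesis
    unfolding Pfun_split s_def by (simp add: algebra_simps)
qed

definition Q :: "real \<Rightarrow> real \<Rightarrow> real \<Rightarrow> real" where
  "Q e t w = (e + t)^2 + (39/20)*t^2 - (4/3)*t^3 + (19/20)*w^2 - (11/6)*w^3"

lemma cubic_ge_one_eighth:
  fixes t :: real
  assumes "0 \<le> t" "t \<le> 2"
  shows "1/8 \<le> 13/30 - (37/20)*t + (13/4)*t^2 - (55/48)*t^3"
proof -
  have "13/30 - (37/20)*t + (13/4)*t^2 - (55/48)*t^3
      = (t - 7/20)^2 * ((5/64)*t + (235/192)*(2 - t)) + 205/1536 + t/256"
    by (simp add: field_simps power2_eq_square power3_eq_cube)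
  moreover have "0 \<le> (t - 7/20)^2 * ((5/64)*t + (235/192)*(2 - t))"
    using assms by simp
  ultimately show ?thesis
    using assms by linarith
qed

lemma Q_nonneg_small_w:
  assumes e: "e = w^2 + t^2 - 2*t" and w: "0 \<le> w" "w \<le> 1/2"
  shows "0 \<le> Q e t w"
proof -
  have "0 \<le> w^2 * (19/20 - (11/6)*w)"
    using w by simp
  then have w_part: "0 \<le> (19/20)*w^2 - (11/6)*w^3"
    by (simp add: algebra_simps power2_eq_square power3_eq_cube)
  have "0 \<le> (e + t)^2 + (39/20)*t^2 - (4/3)*t^3"
  proof (cases "t \<le> 1")
    case True
    have "0 \<le> t^2 * (39/20 - (4/3)*t)"
      using True by simp
    then have "0 \<le> (39/20)*t^2 - (4/3)*t^3"
      by (simp add: algebra_simps power2_eq_square power3_eq_cube)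
    then show ?thesis
      using zero_le_power2[of "e + t"] by linarith
  next
    case False
    have "t^2 - t \<le> e + t" "0 \<le> t^2 - t"
      using False e by (simp_all add: power2_eq_square)
    then have "(t^2 - t)^2 \<le> (e + t)^2"
      by (rule power_mono)
    moreover have "(t^2 - t)^2 + (39/20)*t^2 - (4/3)*t^3 = t^2 * ((t - 5/3)^2 + 31/180)"
      by (simp add: algebra_simps power2_eq_square power3_eq_cube)
    moreover have "0 \<le> t^2 * ((t - 5/3)^2 + 31/180)"
      by simp
    ultimately show ?thesis
      by linarith
  qed
  then show ?thesis
    unfolding Q_def using w_part by linarith
qed

lemma Q_nonneg_large_w:
  assumes e: "e = w^2 + t^2 - 2*t" "\<bar>e\<bar> \<le> 1/1000" and w: "1/2 \<le> w"
  shows "0 \<le> Q e t w"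
proof -
  have "(t - 1)^2 = 1 + e - w^2"
    using e(1) by (simp add: power2_eq_square algebra_simps)
  moreover have "1/4 \<le> w^2"
    using power_mono[OF w, of 2] by (simp add: power2_eq_square)
  moreover have "e \<le> 1/1000"
    using e(2) by simp
  ultimately have "(t - 1)^2 \<le> 49/64"
    by linarith
  then have "\<bar>t - 1\<bar> \<le> 7/8"
    using power2_le_iff_abs_le[of "7/8::real"] by (simp add: power_divide)
  then have t: "1/8 \<le> t" "t \<le> 15/8"
    by linarith+
  have "0 \<le> w^2 * (w - 4/5)^2"
    by simp
  then have am_gm: "(11/6)*w^3 \<le> (55/48)*w^4 + (11/15)*w^2"
    by (simp add: algebra_simps power2_eq_square power3_eq_cube power4_eq_xxxx)
  have "(e + t)^2 + (39/20)*t^2 - (4/3)*t^3 + (13/60)*w^2 - (55/48)*w^4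
      = t * (13/30 - (37/20)*t + (13/4)*t^2 - (55/48)*t^3)
        + e * (13/60 - (31/12)*t + (55/24)*t^2) - (7/48)*e^2"
    unfolding e(1) by (simp add: field_simps power2_eq_square power3_eq_cube power4_eq_xxxx)
  moreover have "1/64 \<le> t * (13/30 - (37/20)*t + (13/4)*t^2 - (55/48)*t^3)"
    using mult_mono[OF t(1) cubic_ge_one_eighth] t by simp
  moreover have "- (14/1000) \<le> e * (13/60 - (31/12)*t + (55/24)*t^2)"
  proof -
    have "t^2 \<le> (15/8)^2"
      using t by (intro power_mono) simp_all
    then have "t^2 \<le> 225/64"
      by (simp add: power_divide)
    then have "\<bar>13/60 - (31/12)*t + (55/24)*t^2\<bar> \<le> 14"
      unfolding abs_le_iff using t zero_le_power2[of t] by linarith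
    then have "\<bar>e * (13/60 - (31/12)*t + (55/24)*t^2)\<bar> \<le> 1/1000 * 14"
      unfolding abs_mult using e(2) by (intro mult_mono) simp_all
    then show ?thesis
      by linarith
  qed
  moreover have "e^2 \<le> 1/1000000"
    using power_mono[OF e(2), of 2] by (simp add: power_divide)
  ultimately show ?thesis
    unfolding Q_def using am_gm by linarith
qed

lemma Q_nonneg:
  assumes "e = w^2 + t^2 - 2*t" "\<bar>e\<bar> \<le> 1/1000" "0 \<le> w"
  shows "0 \<le> Q e t w"
  using assms Q_nonneg_small_w[of e w t] Q_nonneg_large_w[of e w t] by linarith

lemma Pfun_le_Efun_sq:
  assumes \<delta>: "0 \<le> \<delta>" "\<delta> \<le> 1/540" and E: "\<bar>Efun Z1 Z2\<bar> \<le> 1/1000"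
  shows "Pfun \<delta> Z1 Z2 \<le> (Efun Z1 Z2)^2"
proof -
  have "\<bar>Efun Z1 Z2\<bar> \<le> 1"
    using E by simp
  then have "\<bar>Z1\<bar> \<le> 3" "\<bar>Z2\<bar> \<le> 2"
    by (rule Efun_le_one_bounds)+
  then have "Pfun \<delta> Z1 Z2 \<le> (1 + 27*\<delta>) * (Z1^2 + Z2^2)
      + 2*Z1*Z2^2 + (2/3)*Z1^3 - 2*Z2^2 + (11/6)*\<bar>Z2\<bar>^3"
    using Pfun_le \<delta>(1) by blast
  moreover have "(Efun Z1 Z2)^2 - ((21/20) * (Z1^2 + Z2^2)
      + 2*Z1*Z2^2 + (2/3)*Z1^3 - 2*Z2^2 + (11/6)*\<bar>Z2\<bar>^3) = Q (Efun Z1 Z2) (-Z1) \<bar>Z2\<bar>"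
    unfolding Q_def Efun_def by (simp add: field_simps power2_eq_square power3_eq_cube)
  moreover have "0 \<le> Q (Efun Z1 Z2) (-Z1) \<bar>Z2\<bar>"
    using E by (intro Q_nonneg) (simp_all add: Efun_def)
  moreover have "(1 + 27*\<delta>) * (Z1^2 + Z2^2) \<le> (21/20) * (Z1^2 + Z2^2)"
    using \<delta> by (intro mult_right_mono) simp_all
  ultimately show ?thesis
    by linarith
qed

theorem lemma2p6:
  shows "\<exists>\<delta>2 > 0. \<exists>\<delta>3 > 0. \<forall>\<delta>::real. 0 < \<delta> \<and> \<delta> < \<delta>2 \<longrightarrow>
           (\<forall>Z1 Z2::real. \<bar>Efun Z1 Z2\<bar> \<le> \<delta>3 \<longrightarrow> Pfun \<delta> Z1 Z2 - \<bar>Efun Z1 Z2\<bar>^2 \<le> 0)"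
proof (rule exI[of _ "1/540"], intro conjI exI[of _ "1/1000"] allI impI)
  fix \<delta> Z1 Z2 :: real
  assume "0 < \<delta> \<and> \<delta> < 1/540" "\<bar>Efun Z1 Z2\<bar> \<le> 1/1000"
  then show "Pfun \<delta> Z1 Z2 - \<bar>Efun Z1 Z2\<bar>^2 \<le> 0"
    using Pfun_le_Efun_sq[of \<delta> Z1 Z2] by simp
qed simp_all

end
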